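(* Let $0<a<b$ and $v_0\in(a,2a)$. For $\mu\in(v_0,2a]$ define $$\chi_s(\mu)=-\frac{2\sqrt{\mathcal G_s(\mu)-\mathcal G_s(v_0)}}{R_s(v_0)}+2\int_{v_0}^{\mu}\frac{\sqrt{\mathcal G_s(\mu)-\mathcal G_s(\xi)}}{R_s(\xi)^2}\,R_s'(\xi)\,d\xi .$$ Then $\mathcal G_s'(\xi)>0$ on $(a,2a)$, $\chi_s$ is well defined and positive on $(v_0,2a]$, and $\chi_s$ is strictly increasing on $(v_0,2a]$, so that its maximum on this interval is attained at $\mu=2a$.
   Context: $R_s(\xi)=\xi-a-b$, $g(\xi)=(2a-\xi)/\xi^3$, and $\mathcal G_s(\xi)=-\dfrac{a(a+b)}{\xi^2}+\dfrac{3a+b}{\xi}+\log\xi$, so that $\mathcal G_s'(\xi)=-R_s(\xi)g(\xi)=\dfrac{2a(a+b)}{\xi^3}-\dfrac{3a+b}{\xi^2}+\dfrac1\xi$. *)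

theory Defs
  imports "HOL-Analysis.Analysis"
begin

definition Rs :: "real \<Rightarrow> real \<Rightarrow> real \<Rightarrow> real" where
  "Rs a b \<xi> = \<xi> - a - b"

definition gs :: "real \<Rightarrow> real \<Rightarrow> real" where
  "gs a \<xi> = (2*a - \<xi>) / \<xi>^3"

definition Gs :: "real \<Rightarrow> real \<Rightarrow> real \<Rightarrow> real" where
  "Gs a b \<xi> = - (a*(a+b)) / \<xi>^2 + (3*a+b) / \<xi> + ln \<xi>"

definition chi_integrand :: "real \<Rightarrow> real \<Rightarrow> real \<Rightarrow> real \<Rightarrow> real" where
  "chi_integrand a b \<mu> \<xi> =
     sqrt (Gs a b \<mu> - Gs a b \<xi>) / (Rs a b \<xi>)^2 * deriv (Rs a b) \<xi>"

definition chi_s :: "real \<Rightarrow> real \<Rightarrow> real \<Rightarrow> real \<Rightarrow> real" where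
  "chi_s a b v0 \<mu> =
     - 2 * sqrt (Gs a b \<mu> - Gs a b v0) / Rs a b v0
     + 2 * integral {v0..\<mu>} (chi_integrand a b \<mu>)"

end

theory Submission
  imports Defs
begin

text \<open>
  Since \<open>\<G>\<^sub>s' = -R\<^sub>s g\<close> and both \<open>R\<^sub>s < 0\<close> and \<open>g > 0\<close> on \<open>(0, 2a)\<close> (because \<open>2a < a + b\<close>),
  \<open>\<G>\<^sub>s\<close> is strictly increasing on \<open>(0, 2a]\<close>. Hence the integrand of \<open>\<chi>\<^sub>s\<close> is nonnegative and
  increases with \<open>\<mu>\<close>, as does the domain of integration, while the boundary term
  \<open>-2\<surd>(\<G>\<^sub>s(\<mu>) - \<G>\<^sub>s(v\<^sub>0)) / R\<^sub>s(v\<^sub>0)\<close> is strictly increasing because \<open>R\<^sub>s(v\<^sub>0) < 0\<close>.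
  So \<open>\<chi>\<^sub>s\<close> is strictly increasing on \<open>[v\<^sub>0, 2a]\<close>, and positivity follows from \<open>\<chi>\<^sub>s(v\<^sub>0) = 0\<close>.
\<close>

lemma deriv_Rs [simp]: "deriv (Rs a b) x = 1"
  by (rule DERIV_imp_deriv) (auto simp: Rs_def[abs_def] intro!: derivative_eq_intros)

lemma Rs_neg: "x < a + b \<Longrightarrow> Rs a b x < 0"
  by (simp add: Rs_def)

lemma Gs_has_real_derivative:
  assumes "0 < x"
  shows "(Gs a b has_real_derivative - Rs a b x * gs a x) (at x)"
proof -
  have "((\<lambda>x. - (a*(a+b)) / x^2 + (3*a+b) / x + ln x) has_real_derivative
          2*a*(a+b)/x^3 - (3*a+b)/x^2 + 1/x) (at x)"
    using assms by (auto intro!: derivative_eq_intros simp: field_simps eval_nat_numeral)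
  moreover have "2*a*(a+b)/x^3 - (3*a+b)/x^2 + 1/x = - Rs a b x * gs a x"
    using assms by (simp add: Rs_def gs_def field_simps power2_eq_square power3_eq_cube)
  ultimately show ?thesis
    by (simp add: Gs_def[abs_def])
qed

lemma Gs_derivative_pos:
  assumes "a < b" "0 < x" "x < 2*a"
  shows "- Rs a b x * gs a x > 0"
proof -
  have "Rs a b x < 0" using assms by (intro Rs_neg) linarith
  moreover have "gs a x > 0" using assms by (simp add: gs_def)
  ultimately show ?thesis by (simp add: mult_neg_pos)
qed

lemma continuous_on_Gs: "0 < u \<Longrightarrow> continuous_on {u..v} (Gs a b)"
  by (intro continuous_at_imp_continuous_on ballI DERIV_isCont[OF Gs_has_real_derivative]) auto

lemma strict_mono_on_Gs:
  assumes "a < b"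
  shows "strict_mono_on {0<..2*a} (Gs a b)"
proof (rule strict_mono_onI)
  fix x y assume "x \<in> {0<..2*a}" "y \<in> {0<..2*a}" "x < y"
  then have "0 < x" "x < y" "y \<le> 2*a" by auto
  show "Gs a b x < Gs a b y"
  proof (rule DERIV_pos_imp_increasing_open[OF \<open>x < y\<close>])
    fix t assume "x < t" "t < y"
    then show "\<exists>y. (Gs a b has_real_derivative y) (at t) \<and> 0 < y"
      using assms \<open>0 < x\<close> \<open>y \<le> 2*a\<close>
      by (intro exI[of _ "- Rs a b t * gs a t"] conjI Gs_has_real_derivative Gs_derivative_pos)
        auto
  next
    show "continuous_on {x..y} (Gs a b)"
      using \<open>0 < x\<close> by (rule continuous_on_Gs)
  qed
qed

lemma Gs_le:
  assumes "a < b" "0 < x" "x \<le> y" "y \<le> 2*a"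
  shows "Gs a b x \<le> Gs a b y"
  using assms strict_mono_onD[OF strict_mono_on_Gs[OF assms(1)], of x y]
  by (cases "x = y") auto

lemma chi_integrand_eq: "chi_integrand a b \<mu> \<xi> = sqrt (Gs a b \<mu> - Gs a b \<xi>) / (Rs a b \<xi>)^2"
  by (simp add: chi_integrand_def)

lemma continuous_on_chi_integrand:
  assumes "0 < v" "\<mu> < a + b"
  shows "continuous_on {v..\<mu>} (chi_integrand a b \<mu>)"
  unfolding chi_integrand_eq[abs_def] Rs_def using assms
  by (intro continuous_intros continuous_on_compose2[OF continuous_on_real_sqrt] continuous_on_Gs)
     auto

lemma chi_integrand_integrable:
  assumes "a < b" "0 < v" "\<mu> \<le> 2*a"
  shows "chi_integrand a b \<mu> integrable_on {v..\<mu>}"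
  using assms by (intro integrable_continuous_interval continuous_on_chi_integrand) auto

lemma chi_integrand_nonneg:
  assumes "a < b" "0 < \<xi>" "\<xi> \<le> \<mu>" "\<mu> \<le> 2*a"
  shows "0 \<le> chi_integrand a b \<mu> \<xi>"
  using Gs_le[OF assms] by (simp add: chi_integrand_eq)

lemma chi_integral_mono:
  assumes "a < b" "0 < v" "v \<le> \<mu>\<^sub>1" "\<mu>\<^sub>1 \<le> \<mu>\<^sub>2" "\<mu>\<^sub>2 \<le> 2*a"
  shows "integral {v..\<mu>\<^sub>1} (chi_integrand a b \<mu>\<^sub>1) \<le> integral {v..\<mu>\<^sub>2} (chi_integrand a b \<mu>\<^sub>2)"
proof -
  have int: "chi_integrand a b \<mu>\<^sub>1 integrable_on {v..\<mu>\<^sub>1}" "chi_integrand a b \<mu>\<^sub>2 integrable_on {v..\<mu>\<^sub>2}"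
    using assms by (intro chi_integrand_integrable; simp)+
  have int_sub: "chi_integrand a b \<mu>\<^sub>2 integrable_on {v..\<mu>\<^sub>1}"
    using assms by (intro integrable_subinterval_real[OF int(2)]) auto
  have "Gs a b \<mu>\<^sub>1 \<le> Gs a b \<mu>\<^sub>2"
    using assms by (intro Gs_le) auto
  then have "integral {v..\<mu>\<^sub>1} (chi_integrand a b \<mu>\<^sub>1) \<le> integral {v..\<mu>\<^sub>1} (chi_integrand a b \<mu>\<^sub>2)"
    by (intro integral_le[OF int(1) int_sub]) (simp add: chi_integrand_eq divide_right_mono)
  also have "\<dots> \<le> integral {v..\<mu>\<^sub>2} (chi_integrand a b \<mu>\<^sub>2)"
    using assms chi_integrand_nonneg[of a b _ \<mu>\<^sub>2]
    by (intro integral_subset_le[OF _ int_sub int(2)]) auto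
  finally show ?thesis .
qed

lemma chi_s_self [simp]: "chi_s a b v v = 0"
  by (simp add: chi_s_def)

lemma strict_mono_on_chi_s:
  assumes "a < b" "0 < v"
  shows "strict_mono_on {v..2*a} (chi_s a b v)"
proof (rule strict_mono_onI)
  fix \<mu>\<^sub>1 \<mu>\<^sub>2 assume \<mu>: "\<mu>\<^sub>1 \<in> {v..2*a}" "\<mu>\<^sub>2 \<in> {v..2*a}" "\<mu>\<^sub>1 < \<mu>\<^sub>2"
  have "Gs a b \<mu>\<^sub>1 < Gs a b \<mu>\<^sub>2"
    using assms \<mu> by (intro strict_mono_onD[OF strict_mono_on_Gs]) auto
  moreover have "Rs a b v < 0"
    using assms \<mu> by (intro Rs_neg) auto
  ultimately have "- 2 * sqrt (Gs a b \<mu>\<^sub>1 - Gs a b v) / Rs a b v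
                   < - 2 * sqrt (Gs a b \<mu>\<^sub>2 - Gs a b v) / Rs a b v"
    by (simp add: divide_simps)
  moreover have "integral {v..\<mu>\<^sub>1} (chi_integrand a b \<mu>\<^sub>1) \<le> integral {v..\<mu>\<^sub>2} (chi_integrand a b \<mu>\<^sub>2)"
    using assms \<mu> by (intro chi_integral_mono) auto
  ultimately show "chi_s a b v \<mu>\<^sub>1 < chi_s a b v \<mu>\<^sub>2"
    unfolding chi_s_def by linarith
qed

theorem mainTheorem4:
  fixes a b v0 :: real
  assumes "0 < a" "a < b" "a < v0" "v0 < 2*a"
  shows "(\<forall>\<xi>\<in>{a<..<2*a}. Gs a b differentiable at \<xi> \<and> deriv (Gs a b) \<xi> > 0)
    \<and> (\<forall>\<mu>\<in>{v0<..2*a}.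
          (\<forall>\<xi>\<in>{v0..\<mu>}. Gs a b \<xi> \<le> Gs a b \<mu> \<and> Rs a b \<xi> \<noteq> 0)
          \<and> chi_integrand a b \<mu> integrable_on {v0..\<mu>}
          \<and> chi_s a b v0 \<mu> > 0)
    \<and> strict_mono_on {v0<..2*a} (chi_s a b v0)
    \<and> (\<forall>\<mu>\<in>{v0<..2*a}. chi_s a b v0 \<mu> \<le> chi_s a b v0 (2*a))"
proof -
  have v0: "0 < v0" using assms by simp
  note chi_mono = strict_mono_on_chi_s[OF assms(2) v0]
  have Gs_deriv: "Gs a b differentiable at \<xi> \<and> deriv (Gs a b) \<xi> > 0" if "\<xi> \<in> {a<..<2*a}" for \<xi>
    using that assms Gs_has_real_derivative[of \<xi> a b] Gs_derivative_pos[of a b \<xi>]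
    by (auto simp: real_differentiable_def DERIV_imp_deriv)
  have Gs_Rs: "Gs a b \<xi> \<le> Gs a b \<mu> \<and> Rs a b \<xi> \<noteq> 0" if "\<mu> \<in> {v0<..2*a}" "\<xi> \<in> {v0..\<mu>}" for \<xi> \<mu>
    using that assms Gs_le[of a b \<xi> \<mu>] Rs_neg[of \<xi> a b] by auto
  have chi_pos: "chi_s a b v0 \<mu> > 0" if "\<mu> \<in> {v0<..2*a}" for \<mu>
    using that strict_mono_onD[OF chi_mono, of v0 \<mu>] assms by auto
  have chi_max: "chi_s a b v0 \<mu> \<le> chi_s a b v0 (2*a)" if "\<mu> \<in> {v0<..2*a}" for \<mu>
    using that assms strict_mono_onD[OF chi_mono, of \<mu> "2*a"] by (cases "\<mu> = 2*a") auto
  have "strict_mono_on {v0<..2*a} (chi_s a b v0)"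
    by (rule monotone_on_subset[OF chi_mono]) auto
  moreover have "chi_integrand a b \<mu> integrable_on {v0..\<mu>}" if "\<mu> \<in> {v0<..2*a}" for \<mu>
    using that by (intro chi_integrand_integrable[OF assms(2) v0]) simp
  ultimately show ?thesis
    using Gs_deriv Gs_Rs chi_pos chi_max by blast
qed

end
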